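(* Let $j\in\mathbb{N}$ and let $n=p_1^{a_1}\cdots p_k^{a_k}$ with $k\in\mathbb{N}$, distinct primes $p_1,\dots,p_k$ and $a_1,\dots,a_k\in\mathbb{N}$. Then \[c_j(p_1^{a_1}\cdots p_k^{a_k})=(-1)^{1-j}\,j\;{}_{k+1}F_k\big(a_1+1,\dots,a_k+1,\,1-j;\ \underbrace{1,\dots,1}_{k-1},\,2;\ 1\big).\]
   Context: For $j,n\in\mathbb{N}$, $c_j(n)$ is the number of ordered $j$-tuples of integers each $\ge 2$ whose product is $n$. The generalised hypergeometric series is ${}_kF_n(a_1,\dots,a_k;b_1,\dots,b_n;z)=\sum_{m=0}^\infty \frac{a_1^{\overline m}\cdots a_k^{\overline m}\,z^m}{b_1^{\overline m}\cdots b_n^{\overline m}\,m!}$, with the rising factorial $a^{\overline m}=\prod_{i=0}^{m-1}(a+i)$, $a^{\overline 0}=1$; here the series terminates since $(1-j)^{\overline m}=0$ for $m\ge j$. *)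

theory Defs
  imports Complex_Main "HOL-Computational_Algebra.Primes"
begin

definition c :: "nat \<Rightarrow> nat \<Rightarrow> nat" where
  "c j n = card {xs :: int list. length xs = j \<and> (\<forall>x\<in>set xs. x \<ge> 2) \<and> prod_list xs = int n}"

definition hypergeom :: "real list \<Rightarrow> real list \<Rightarrow> real \<Rightarrow> real" where
  "hypergeom as bs z =
     (\<Sum>m. prod_list (map (\<lambda>a. pochhammer a m) as) * z ^ m /
           (prod_list (map (\<lambda>b. pochhammer b m) bs) * fact m))"

end

theory Submission
  imports Defs
begin

(* Let d_j(n) count the ordered j-tuples of positive integers with product n. Deleting the
   entries equal to 1 gives d_j = sum_i C(j,i) c_i, hence by binomial inversion
   c_j = sum_i (-1)^(j-i) C(j,i) d_i; equivalently, this follows by induction on j from the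
   divisor recursions d_(j+1)(n) = sum_(d|n) d_j(n/d) and c_(j+1)(n) + c_j(n) = sum_(d|n) c_j(n/d).
   The function d_(m+1) is multiplicative with d_(m+1)(p^a) = C(a+m,m), so
   c_j(n) = sum_(m<j) (-1)^(j-1-m) C(j,m+1) prod_l C(a_l+m,m). For rising factorials
   (a+1)^(m) = m! C(a+m,m), (1-j)^(m) = (-1)^m m! C(j-1,m) and 2^(m) = (m+1)!, so j times the
   m-th term of the terminating hypergeometric series is (-1)^m C(j,m+1) prod_l C(a_l+m,m). *)

definition factorizations :: "nat \<Rightarrow> nat \<Rightarrow> nat \<Rightarrow> nat list set" where
  "factorizations lo j n = {xs. length xs = j \<and> (\<forall>x\<in>set xs. lo \<le> x) \<and> prod_list xs = n}"

lemma finite_factorizations: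
  assumes "n > 0"
  shows "finite (factorizations lo j n)"
proof (rule finite_subset)
  show "factorizations lo j n \<subseteq> {xs. set xs \<subseteq> {..n} \<and> length xs = j}"
    using assms by (auto simp: factorizations_def intro!: dvd_imp_le prod_list_dvd)
qed (simp add: finite_lists_length_eq)

lemma factorizations_0: "factorizations lo 0 n = (if n = 1 then {[]} else {})"
  by (auto simp: factorizations_def)

lemma card_factorizations_Suc:
  assumes "n > 0" "lo \<ge> 1"
  shows "card (factorizations lo (Suc j) n) =
    (\<Sum>d | d dvd n \<and> lo \<le> d. card (factorizations lo j (n div d)))"
proof -
  let ?D = "{d. d dvd n \<and> lo \<le> d}"
  have "finite ?D"
    using assms(1) by (auto intro: finite_subset[of _ "{..n}"] dvd_imp_le)
  have split: "factorizations lo (Suc j) n = (\<Union>d\<in>?D. (#) d ` factorizations lo j (n div d))"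
  proof (intro equalityI subsetI)
    fix xs
    assume "xs \<in> factorizations lo (Suc j) n"
    then obtain d ys where "xs = d # ys" "d * prod_list ys = n" "lo \<le> d" "ys \<in> factorizations lo j (prod_list ys)"
      by (cases xs) (auto simp: factorizations_def)
    moreover have "n div d = prod_list ys"
      using \<open>d * prod_list ys = n\<close> \<open>lo \<le> d\<close> assms(2) by auto
    ultimately show "xs \<in> (\<Union>d\<in>?D. (#) d ` factorizations lo j (n div d))"
      by (intro UN_I[of d]) auto
  qed (auto simp: factorizations_def)
  have "card (factorizations lo (Suc j) n) = (\<Sum>d\<in>?D. card ((#) d ` factorizations lo j (n div d)))"
    unfolding split using \<open>finite ?D\<close> assms
    by (intro card_UN_disjoint) (auto intro!: finite_imageI finite_factorizations)
  then show ?thesis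
    by (simp add: card_image)
qed

lemma c_eq_card_factorizations: "c j n = card (factorizations 2 j n)"
proof -
  have int_prod_list: "int (prod_list ys) = prod_list (map int ys)" for ys
    by (induction ys) simp_all
  have "{xs :: int list. length xs = j \<and> (\<forall>x\<in>set xs. x \<ge> 2) \<and> prod_list xs = int n}
      = map int ` factorizations 2 j n"
  proof (intro equalityI subsetI)
    fix xs :: "int list"
    assume xs: "xs \<in> {xs. length xs = j \<and> (\<forall>x\<in>set xs. x \<ge> 2) \<and> prod_list xs = int n}"
    then have xs_eq: "map (int \<circ> nat) xs = xs"
      by (intro map_idI) auto
    have "int (prod_list (map nat xs)) = int n"
      using xs by (simp add: int_prod_list xs_eq)
    then have "map nat xs \<in> factorizations 2 j n"
      using xs by (auto simp: factorizations_def)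
    moreover have "xs = map int (map nat xs)"
      using xs_eq by simp
    ultimately show "xs \<in> map int ` factorizations 2 j n" by blast
  qed (auto simp: factorizations_def int_prod_list)
  then show ?thesis
    unfolding c_def by (simp add: card_image inj_on_def)
qed

lemma card_factorizations_1_Suc:
  assumes "n > 0"
  shows "card (factorizations 1 (Suc j) n) = (\<Sum>d | d dvd n. card (factorizations 1 j (n div d)))"
proof -
  have "{d. d dvd n \<and> 1 \<le> d} = {d. d dvd n}"
    using assms by (auto intro: Nat.gr0I)
  then show ?thesis
    using card_factorizations_Suc[of n 1 j] assms by simp
qed

lemma bij_betw_mult_divisors:
  fixes m q :: nat
  assumes "coprime m q"
  shows "bij_betw (\<lambda>(x, y). x * y) ({x. x dvd m} \<times> {y. y dvd q}) {d. d dvd m * q}"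
proof (rule bij_betw_imageI)
  show "inj_on (\<lambda>(x, y). x * y) ({x. x dvd m} \<times> {y. y dvd q})"
  proof (rule inj_onI, clarify)
    fix x y x' y' :: nat
    assume dvd: "x dvd m" "y dvd q" "x' dvd m" "y' dvd q" and eq: "x * y = x' * y'"
    have "coprime x y'" "coprime x' y"
      using assms dvd by (meson coprime_divisors)+
    with eq have "x dvd x'" "x' dvd x"
      by (metis coprime_dvd_mult_left_iff dvd_triv_left)+
    moreover from eq \<open>coprime x y'\<close> \<open>coprime x' y\<close> have "y dvd y'" "y' dvd y"
      by (metis coprime_dvd_mult_right_iff coprime_commute dvd_triv_right)+
    ultimately show "x = x' \<and> y = y'"
      by (simp add: dvd_antisym)
  qed
  show "(\<lambda>(x, y). x * y) ` ({x. x dvd m} \<times> {y. y dvd q}) = {d. d dvd m * q}"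
    by (auto dest: division_decomp intro: mult_dvd_mono)
qed

lemma card_factorizations_1_mult:
  fixes m q :: nat
  assumes "coprime m q" "m > 0" "q > 0"
  shows "card (factorizations 1 j (m * q)) = card (factorizations 1 j m) * card (factorizations 1 j q)"
  using assms
proof (induction j arbitrary: m q)
  case 0
  then show ?case by (simp add: factorizations_0)
next
  case (Suc j)
  let ?d = "\<lambda>n. card (factorizations 1 j n)"
  have "card (factorizations 1 (Suc j) (m * q)) = (\<Sum>d | d dvd m * q. ?d (m * q div d))"
    using Suc.prems by (intro card_factorizations_1_Suc) simp
  also have "\<dots> = (\<Sum>(x, y)\<in>{x. x dvd m} \<times> {y. y dvd q}. ?d (m * q div (x * y)))"
    by (simp only: sum.reindex_bij_betw[OF bij_betw_mult_divisors[OF Suc.prems(1)], symmetric])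
      (simp add: case_prod_unfold)
  also have "\<dots> = (\<Sum>(x, y)\<in>{x. x dvd m} \<times> {y. y dvd q}. ?d (m div x) * ?d (q div y))"
  proof (intro sum.cong refl, clarify)
    fix x y
    assume "x dvd m" "y dvd q"
    moreover have "m div x dvd m" "q div y dvd q"
      using \<open>x dvd m\<close> \<open>y dvd q\<close> by (metis dvd_div_mult_self dvd_triv_left)+
    ultimately have "m * q div (x * y) = (m div x) * (q div y)" "coprime (m div x) (q div y)"
      "m div x > 0" "q div y > 0"
      using Suc.prems by (auto simp: div_mult_div_if_dvd dvd_div_eq_0_iff intro: coprime_divisors)
    then show "?d (m * q div (x * y)) = ?d (m div x) * ?d (q div y)"
      using Suc.IH by simp
  qed
  also have "\<dots> = (\<Sum>x | x dvd m. ?d (m div x)) * (\<Sum>y | y dvd q. ?d (q div y))"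
    by (simp add: sum_product sum.cartesian_product)
  also have "\<dots> = card (factorizations 1 (Suc j) m) * card (factorizations 1 (Suc j) q)"
    using Suc.prems card_factorizations_1_Suc[of m j] card_factorizations_1_Suc[of q j] by simp
  finally show ?case .
qed

lemma card_factorizations_1_prime_power:
  assumes "prime (p :: nat)"
  shows "card (factorizations 1 (Suc m) (p ^ a)) = (a + m) choose m"
proof (induction m arbitrary: a)
  case 0
  have "factorizations 1 1 (p ^ a) = {[p ^ a]}"
    using assms by (auto simp: factorizations_def length_Suc_conv Suc_le_eq prime_gt_0_nat)
  then show ?case by simp
next
  case (Suc m)
  have "p > 1"
    using assms prime_gt_1_nat by blast
  have divisors: "{d. d dvd p ^ a} = (\<lambda>b. p ^ (a - b)) ` {..a}"
  proof (intro equalityI subsetI)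
    fix d
    assume "d \<in> {d. d dvd p ^ a}"
    then obtain i where "i \<le> a" "d = p ^ i"
      using divides_primepow_nat[OF assms] by auto
    then show "d \<in> (\<lambda>b. p ^ (a - b)) ` {..a}"
      by (intro image_eqI[of _ _ "a - i"]) auto
  qed (auto simp: le_imp_power_dvd)
  have "inj_on (\<lambda>b. p ^ (a - b)) {..a}"
    using \<open>p > 1\<close> by (auto intro!: inj_onI dest: power_inject_exp[THEN iffD1, rotated])
  then have "card (factorizations 1 (Suc (Suc m)) (p ^ a))
      = (\<Sum>b\<le>a. card (factorizations 1 (Suc m) (p ^ a div p ^ (a - b))))"
    using \<open>p > 1\<close> card_factorizations_1_Suc[of "p ^ a" "Suc m"]
    by (simp add: divisors sum.reindex)
  also have "\<dots> = (\<Sum>b\<le>a. (b + m) choose m)"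
  proof (intro sum.cong refl)
    fix b
    assume "b \<in> {..a}"
    then have "p ^ a = p ^ (a - b) * p ^ b"
      by (simp flip: power_add)
    then have "p ^ a div p ^ (a - b) = p ^ b"
      using \<open>p > 1\<close> by simp
    then show "card (factorizations 1 (Suc m) (p ^ a div p ^ (a - b))) = (b + m) choose m"
      using Suc.IH by simp
  qed
  also have "\<dots> = (a + Suc m) choose Suc m"
    by (induction a) simp_all
  finally show ?case .
qed

lemma card_factorizations_1_prod_prime_powers:
  assumes "finite S" "\<And>i. i \<in> S \<Longrightarrow> prime (p i)" "inj_on p S"
  shows "card (factorizations 1 (Suc m) (\<Prod>i\<in>S. p i ^ a i)) = (\<Prod>i\<in>S. (a i + m) choose m)"
  using assms
proof (induction S rule: finite_induct)
  case empty
  show ?case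
    using card_factorizations_1_prime_power[of 2 m 0] by simp
next
  case (insert x S)
  have "coprime (p x ^ a x) (\<Prod>i\<in>S. p i ^ a i)"
  proof (rule prod_coprime_right)
    fix i
    assume "i \<in> S"
    with insert.prems insert.hyps(2) have "prime (p x)" "prime (p i)" "p x \<noteq> p i"
      by (auto simp: inj_on_def)
    then show "coprime (p x ^ a x) (p i ^ a i)"
      by (simp add: primes_coprime)
  qed
  moreover have "p x ^ a x > 0" "(\<Prod>i\<in>S. p i ^ a i) > 0"
    using insert.prems by (auto intro!: prod_pos simp: prime_gt_0_nat)
  ultimately have "card (factorizations 1 (Suc m) (\<Prod>i\<in>insert x S. p i ^ a i))
      = card (factorizations 1 (Suc m) (p x ^ a x)) * card (factorizations 1 (Suc m) (\<Prod>i\<in>S. p i ^ a i))"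
    unfolding prod.insert[OF insert.hyps] by (rule card_factorizations_1_mult)
  then show ?case
    using insert card_factorizations_1_prime_power by (simp add: inj_on_insert)
qed

lemma alternating_binomial_sum_Suc:
  fixes g :: "nat \<Rightarrow> 'a :: comm_ring_1"
  shows "(\<Sum>i\<le>Suc j. (-1)^i * of_nat (Suc j choose i) * g i)
       = (\<Sum>i\<le>j. (-1)^i * of_nat (j choose i) * g i) - (\<Sum>i\<le>j. (-1)^i * of_nat (j choose i) * g (Suc i))"
proof -
  have "(\<Sum>i\<le>Suc j. (-1)^i * of_nat (Suc j choose i) * g i)
      = g 0 + (\<Sum>i\<le>j. (-1)^Suc i * of_nat (Suc j choose Suc i) * g (Suc i))"
    by (simp only: sum.atMost_Suc_shift) simp
  also have "(\<Sum>i\<le>j. (-1)^Suc i * of_nat (Suc j choose Suc i) * g (Suc i))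
      = (\<Sum>i\<le>j. (-1)^Suc i * of_nat (j choose Suc i) * g (Suc i))
        - (\<Sum>i\<le>j. (-1)^i * of_nat (j choose i) * g (Suc i))"
    by (subst sum_subtractf[symmetric], intro sum.cong refl) (simp add: algebra_simps)
  also have "g 0 + ((\<Sum>i\<le>j. (-1)^Suc i * of_nat (j choose Suc i) * g (Suc i))
        - (\<Sum>i\<le>j. (-1)^i * of_nat (j choose i) * g (Suc i)))
      = (\<Sum>i\<le>Suc j. (-1)^i * of_nat (j choose i) * g i)
        - (\<Sum>i\<le>j. (-1)^i * of_nat (j choose i) * g (Suc i))"
    by (simp only: sum.atMost_Suc_shift[of _ j]) simp
  finally show ?thesis
    by (simp add: binomial_eq_0)
qed

lemma card_factorizations_2_binomial_transform:
  assumes "n > 0"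
  shows "real (card (factorizations 2 j n)) =
    (-1)^j * (\<Sum>i\<le>j. (-1)^i * real (j choose i) * real (card (factorizations 1 i n)))"
  using assms
proof (induction j arbitrary: n)
  case 0
  then show ?case by (simp add: factorizations_0)
next
  case (Suc j)
  let ?c = "\<lambda>j n. real (card (factorizations 2 j n))"
  let ?d = "\<lambda>i n. real (card (factorizations 1 i n))"
  have divisors: "{d. d dvd n} = insert 1 {d. d dvd n \<and> 2 \<le> d}"
    using Suc.prems by (auto intro: Nat.gr0I simp: numeral_2_eq_2 Suc_le_eq)
  have "finite {d. d dvd n \<and> 2 \<le> d}"
    using Suc.prems by (auto intro: finite_subset[of _ "{..n}"] dvd_imp_le)
  then have "?c (Suc j) n = (\<Sum>d | d dvd n. ?c j (n div d)) - ?c j n"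
    using Suc.prems by (simp add: divisors card_factorizations_Suc of_nat_sum)
  also have "(\<Sum>d | d dvd n. ?c j (n div d))
      = (\<Sum>d | d dvd n. (-1)^j * (\<Sum>i\<le>j. (-1)^i * real (j choose i) * ?d i (n div d)))"
    using Suc.prems by (intro sum.cong refl Suc.IH) (auto simp: dvd_div_eq_0_iff)
  also have "\<dots> = (-1)^j * (\<Sum>i\<le>j. (-1)^i * real (j choose i) * (\<Sum>d | d dvd n. ?d i (n div d)))"
    by (simp add: sum_distrib_left sum.swap[of _ "{d. d dvd n}"])
  also have "\<dots> = (-1)^j * (\<Sum>i\<le>j. (-1)^i * real (j choose i) * ?d (Suc i) n)"
    using Suc.prems card_factorizations_1_Suc[of n] by (simp add: of_nat_sum)
  also have "?c j n = (-1)^j * (\<Sum>i\<le>j. (-1)^i * real (j choose i) * ?d i n)"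
    using Suc.IH[OF Suc.prems] .
  also have "(-1)^j * (\<Sum>i\<le>j. (-1)^i * real (j choose i) * ?d (Suc i) n)
      - (-1)^j * (\<Sum>i\<le>j. (-1)^i * real (j choose i) * ?d i n)
      = (-1)^Suc j * (\<Sum>i\<le>Suc j. (-1)^i * real (Suc j choose i) * ?d i n)"
    by (simp only: alternating_binomial_sum_Suc) (simp add: algebra_simps)
  finally show ?case .
qed

lemma card_factorizations_2_Suc:
  assumes "n > 1"
  shows "real (card (factorizations 2 (Suc j) n)) =
    (-1)^j * (\<Sum>m\<le>j. (-1)^m * real (Suc j choose Suc m) * real (card (factorizations 1 (Suc m) n)))"
proof -
  have "real (card (factorizations 2 (Suc j) n)) =
      (-1)^Suc j * (\<Sum>m\<le>j. (-1)^Suc m * real (Suc j choose Suc m) * real (card (factorizations 1 (Suc m) n)))"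
    using assms card_factorizations_2_binomial_transform[of n "Suc j"]
    by (simp add: sum.atMost_Suc_shift factorizations_0 del: sum.atMost_Suc binomial_Suc_Suc)
  then show ?thesis
    by (simp add: sum_distrib_left)
qed

lemma pochhammer_of_nat_plus_1:
  "pochhammer (of_nat a + 1 :: 'a :: field_char_0) m = of_nat ((a + m) choose m) * fact m"
  by (simp add: binomial_gbinomial gbinomial_pochhammer')

lemma pochhammer_minus_of_nat:
  "pochhammer (- of_nat n :: 'a :: field_char_0) m = (-1)^m * of_nat (n choose m) * fact m"
  by (simp add: binomial_gbinomial gbinomial_pochhammer)

lemma hypergeom_terminating:
  assumes "- real n \<in> set as"
  shows "hypergeom as bs z = (\<Sum>m\<le>n. prod_list (map (\<lambda>a. pochhammer a m) as) * z ^ m /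
           (prod_list (map (\<lambda>b. pochhammer b m) bs) * fact m))"
  unfolding hypergeom_def
proof (rule suminf_finite)
  fix m
  assume "m \<notin> {..n}"
  then have "pochhammer (- real n) m = 0"
    by (simp add: pochhammer_of_nat_eq_0_lemma)
  then have "prod_list (map (\<lambda>a. pochhammer a m) as) = 0"
    using assms by (force simp: prod_list_zero_iff)
  then show "prod_list (map (\<lambda>a. pochhammer a m) as) * z ^ m /
      (prod_list (map (\<lambda>b. pochhammer b m) bs) * fact m) = 0"
    by simp
qed simp

lemma hypergeom_closed_form:
  fixes j k :: nat and a :: "nat \<Rightarrow> nat"
  assumes "k \<ge> 1"
  shows "(-1) powi (1 - int (Suc j)) * real (Suc j) *
      hypergeom (map (\<lambda>i. real (a i + 1)) [1..<k+1] @ [1 - real (Suc j)]) (replicate (k - 1) 1 @ [2]) 1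
    = (-1)^j * (\<Sum>m\<le>j. (-1)^m * real (Suc j choose Suc m) * (\<Prod>l\<in>{1..k}. real ((a l + m) choose m)))"
proof -
  let ?as = "map (\<lambda>i. real (a i + 1)) [1..<k+1] @ [1 - real (Suc j)]"
  let ?bs = "replicate (k - 1) 1 @ [2 :: real]"
  let ?P = "\<lambda>m. \<Prod>l\<in>{1..k}. real ((a l + m) choose m)"
  have summand: "real (Suc j) * (prod_list (map (\<lambda>x. pochhammer x m) ?as) * 1 ^ m /
      (prod_list (map (\<lambda>x. pochhammer x m) ?bs) * fact m)) = (-1)^m * real (Suc j choose Suc m) * ?P m"
    for m
  proof -
    define F :: real where "F = fact m"
    have "F > 0"
      by (simp add: F_def)
    have "prod_list (map (\<lambda>x. pochhammer x m) (map (\<lambda>i. real (a i + 1)) [1..<k+1]))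
        = (\<Prod>l\<in>{1..k}. pochhammer (real (a l) + 1) m)"
      by (simp add: prod.distinct_set_conv_list[symmetric] atLeastLessThanSuc_atLeastAtMost o_def add.commute
          del: upt_Suc)
    also have "\<dots> = ?P m * F ^ k"
      by (simp add: pochhammer_of_nat_plus_1 prod.distrib F_def)
    finally have upper: "prod_list (map (\<lambda>x. pochhammer x m) ?as) = ?P m * F ^ k * ((-1)^m * real (j choose m) * F)"
      using pochhammer_minus_of_nat[of j m] by (simp add: F_def)
    have "pochhammer (2 :: real) m = fact (Suc m)"
      using pochhammer_rec[of "1 :: real" m] by (simp add: pochhammer_fact)
    then have lower: "prod_list (map (\<lambda>x. pochhammer x m) ?bs) = F ^ (k - 1) * (real (Suc m) * F)"
      by (simp add: F_def flip: pochhammer_fact)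
    have "F ^ k = F ^ (k - 1) * F"
      using assms by (simp flip: power_Suc2)
    moreover have "real (Suc j) * real (j choose m) = real (Suc m) * real (Suc j choose Suc m)"
      by (simp only: Suc_times_binomial flip: of_nat_mult)
    ultimately show ?thesis
      unfolding upper lower F_def[symmetric] using \<open>F > 0\<close>
      by (simp add: field_simps del: binomial_Suc_Suc of_nat_Suc)
  qed
  have "hypergeom ?as ?bs 1 = (\<Sum>m\<le>j. prod_list (map (\<lambda>x. pochhammer x m) ?as) * 1 ^ m /
      (prod_list (map (\<lambda>x. pochhammer x m) ?bs) * fact m))"
    by (rule hypergeom_terminating) simp
  moreover have "(-1) powi (1 - int (Suc j)) = (-1 :: real) ^ j"
    by (simp add: power_int_minus flip: power_inverse)
  ultimately have "(-1) powi (1 - int (Suc j)) * real (Suc j) * hypergeom ?as ?bs 1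
      = (-1)^j * (\<Sum>m\<le>j. real (Suc j) * (prod_list (map (\<lambda>x. pochhammer x m) ?as) * 1 ^ m /
          (prod_list (map (\<lambda>x. pochhammer x m) ?bs) * fact m)))"
    by (simp only: sum_distrib_left mult.assoc)
  then show ?thesis
    by (simp only: summand)
qed

theorem theorem1:
  fixes j k :: nat and p a :: "nat \<Rightarrow> nat"
  assumes "j \<ge> 1" and "k \<ge> 1"
    and "\<And>i. i \<in> {1..k} \<Longrightarrow> prime (p i)"
    and "inj_on p {1..k}"
    and "\<And>i. i \<in> {1..k} \<Longrightarrow> a i \<ge> 1"
  shows "real (c j (\<Prod>i\<in>{1..k}. p i ^ a i)) =
    (-1) powi (1 - int j) * real j *
      hypergeom (map (\<lambda>i. real (a i + 1)) [1..<k+1] @ [1 - real j])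
                (replicate (k - 1) 1 @ [2]) 1"
proof -
  obtain j' where j: "j = Suc j'"
    using assms(1) by (cases j) auto
  define N where "N = (\<Prod>i\<in>{1..k}. p i ^ a i)"
  have "prime (p 1)" "a 1 \<ge> 1"
    using assms(2,3,5) by auto
  then have "p 1 ^ a 1 > 1"
    by (intro one_less_power prime_gt_1_nat) auto
  moreover have "p 1 ^ a 1 dvd N" "N > 0"
    using assms(2,3) by (auto simp: N_def prime_gt_0_nat intro!: dvd_prodI prod_pos)
  ultimately have "N > 1"
    by (meson dvd_imp_le less_le_trans)
  have card_N: "card (factorizations 1 (Suc m) N) = (\<Prod>l\<in>{1..k}. (a l + m) choose m)" for m
    unfolding N_def using assms(3,4) by (intro card_factorizations_1_prod_prime_powers) auto
  have "real (c j N) = (-1)^j' *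
      (\<Sum>m\<le>j'. (-1)^m * real (Suc j' choose Suc m) * real (card (factorizations 1 (Suc m) N)))"
    unfolding j c_eq_card_factorizations by (rule card_factorizations_2_Suc[OF \<open>N > 1\<close>])
  also have "\<dots> = (-1)^j' *
      (\<Sum>m\<le>j'. (-1)^m * real (Suc j' choose Suc m) * (\<Prod>l\<in>{1..k}. real ((a l + m) choose m)))"
    by (simp only: card_N of_nat_prod)
  also have "\<dots> = (-1) powi (1 - int j) * real j *
      hypergeom (map (\<lambda>i. real (a i + 1)) [1..<k+1] @ [1 - real j]) (replicate (k - 1) 1 @ [2]) 1"
    unfolding j by (rule hypergeom_closed_form[OF assms(2), symmetric])
  finally show ?thesis
    unfolding N_def .
qed

end
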